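(* The L\'evy measure $Q$ of a time-stable process is supported by the set $\{f\in\mathbb{R}^{[0,\infty)}\setminus\{0\}:\ f(0)=0\}$, i.e. $Q(\{f:\ f(0)\neq0\})=0$.
   Context: For a process $\eta$ on $[0,\infty)$ and $a>0$, $(a\circ\eta)(t)=\eta(at)$. A stochastically continuous real-valued process $\xi(t)$, $t\geq0$, is time-stable if for each integer $n\geq2$, $\xi_1+\cdots+\xi_n$ and $n\circ\xi$ have the same finite-dimensional distributions, where $\xi_1,\dots,\xi_n$ are i.i.d. copies of $\xi$. L\'evy measure: an infinitely divisible stochastically continuous process $\xi$ (its Gaussian part, if any, removed) admits a representation in which there is a deterministic function $c$ on $[0,\infty)$ and a $\sigma$-finite measure $Q$ on $\mathbb{R}^{[0,\infty)}\setminus\{0\}$ (cylindrical $\sigma$-algebra, completed with respect to $Q$) with $\int\min(1,f(t)^2)Q(df)<\infty$ for all $t\geq0$, such that for all $k\geq1$, $t_1,\dots,t_k\geq0$, $\theta_1,\dots,\theta_k\in\mathbb{R}$, $$\mathbb{E}e^{\mathrm{i}\sum_j\theta_j\xi(t_j)}=\exp\Big\{\mathrm{i}\sum_j\theta_jc(t_j)+\int\Big[e^{\mathrm{i}\sum_j\theta_jf(t_j)}-1-\mathrm{i}\sum_j\theta_jL(f(t_j))\Big]Q(df)\Big\},$$ where $L(u)=u$ for $|u|\le1$, $L(u)=1$ for $u>1$, $L(u)=-1$ for $u<-1$. (Equivalently $\xi(t)$ equals in law $c(t)$ plus the compensated sum of the values at $t$ of the points of a Poisson process on $\mathbb{R}^{[0,\infty)}\setminus\{0\}$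 with intensity $Q$.) The representation can be chosen minimal: the $\sigma$-algebra generated by the sets $\{f:f(t)\in A\}$, $t\ge0$, $A$ Borel, coincides with the cylindrical $\sigma$-algebra up to $Q$-null sets, and there is no measurable $B$ with $Q(B)>0$ such that $Q(\{f\in B: f(t)\neq0\})=0$ for every $t\geq0$. The minimal representation is unique up to isomorphism; its $Q$ is called the L\'evy measure of $\xi$. *)

theory Defs
  imports "HOL-Probability.Probability"
begin

definition trunc_L :: "real \<Rightarrow> real" where
  "trunc_L u = (if \<bar>u\<bar> \<le> 1 then u else if u > 1 then 1 else -1)"

abbreviation path_space :: "(real \<Rightarrow> real) measure" where
  "path_space \<equiv> Pi\<^sub>M {0::real..} (\<lambda>_. (borel :: real measure))"

abbreviation zero_path :: "real \<Rightarrow> real" where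
  "zero_path \<equiv> restrict (\<lambda>_. 0) {0::real..}"

definition same_fdd ::
  "'a measure \<Rightarrow> (real \<Rightarrow> 'a \<Rightarrow> real) \<Rightarrow> 'b measure \<Rightarrow> (real \<Rightarrow> 'b \<Rightarrow> real) \<Rightarrow> bool" where
  "same_fdd M X N Y \<longleftrightarrow>
     (\<forall>T. finite T \<and> T \<subseteq> {0..} \<longrightarrow>
        distr M (Pi\<^sub>M T (\<lambda>_. borel)) (\<lambda>\<omega>. \<lambda>t\<in>T. X t \<omega>)
      = distr N (Pi\<^sub>M T (\<lambda>_. borel)) (\<lambda>\<omega>. \<lambda>t\<in>T. Y t \<omega>))"

definition real_process :: "'a measure \<Rightarrow> (real \<Rightarrow> 'a \<Rightarrow> real) \<Rightarrow> bool" where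
  "real_process M X \<longleftrightarrow> prob_space M \<and> (\<forall>t\<ge>0. X t \<in> borel_measurable M)"

definition stoch_continuous :: "'a measure \<Rightarrow> (real \<Rightarrow> 'a \<Rightarrow> real) \<Rightarrow> bool" where
  "stoch_continuous M X \<longleftrightarrow>
     (\<forall>t\<ge>0. \<forall>\<epsilon>>0. ((\<lambda>s. measure M {\<omega>\<in>space M. \<epsilon> < \<bar>X s \<omega> - X t \<omega>\<bar>}) \<longlongrightarrow> 0)
                      (at t within {0..}))"

text \<open>Time-stability: for every n \<ge> 2, the sum of n i.i.d. copies of X
  (realised canonically on the n-fold product space) has the same
  finite-dimensional distributions as the time-scaled process t \<mapsto> X (n t).\<close>
definition time_stable :: "'a measure \<Rightarrow> (real \<Rightarrow> 'a \<Rightarrow> real) \<Rightarrow> bool" where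
  "time_stable M X \<longleftrightarrow> real_process M X \<and> stoch_continuous M X \<and>
     (\<forall>n::nat. n \<ge> 2 \<longrightarrow>
        same_fdd (Pi\<^sub>M {..<n} (\<lambda>_. M)) (\<lambda>t \<omega>. \<Sum>i<n. X t (\<omega> i))
                 M (\<lambda>t \<omega>. X (real n * t) \<omega>))"

definition levy_representation ::
  "'a measure \<Rightarrow> (real \<Rightarrow> 'a \<Rightarrow> real) \<Rightarrow> (real \<Rightarrow> real) \<Rightarrow> (real \<Rightarrow> real \<Rightarrow> real)
    \<Rightarrow> (real \<Rightarrow> real) measure \<Rightarrow> bool" where
  "levy_representation M X c K Q \<longleftrightarrow>
     (\<forall>s t. K s t = K t s) \<and>
     (\<forall>T \<theta>. finite T \<and> T \<subseteq> {0..} \<longrightarrow> 0 \<le> (\<Sum>s\<in>T. \<Sum>t\<in>T. \<theta> s * \<theta> t * K s t)) \<and>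
     sets Q = sets (restrict_space path_space (space path_space - {zero_path})) \<and>
     sigma_finite_measure Q \<and>
     (\<forall>t\<ge>0. (\<integral>\<^sup>+ f. ennreal (min 1 ((f t)\<^sup>2)) \<partial>Q) < \<infinity>) \<and>
     (\<forall>T \<theta>. finite T \<and> T \<subseteq> {0..} \<longrightarrow>
        (\<integral>\<omega>. cis (\<Sum>t\<in>T. \<theta> t * X t \<omega>) \<partial>M)
        = exp (\<i> * complex_of_real (\<Sum>t\<in>T. \<theta> t * c t)
               - complex_of_real ((1/2) * (\<Sum>s\<in>T. \<Sum>t\<in>T. \<theta> s * \<theta> t * K s t))
               + (\<integral>f. cis (\<Sum>t\<in>T. \<theta> t * f t) - 1
                        - \<i> * complex_of_real (\<Sum>t\<in>T. \<theta> t * trunc_L (f t)) \<partial>Q)))"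

text \<open>Minimality (the generating condition is automatic for the cylindrical
  sigma-algebra): no set of positive Q-measure on which all coordinates vanish
  Q-a.e.\<close>
definition levy_minimal :: "(real \<Rightarrow> real) measure \<Rightarrow> bool" where
  "levy_minimal Q \<longleftrightarrow>
     \<not> (\<exists>B\<in>sets Q. emeasure Q B > 0 \<and> (\<forall>t\<ge>0. emeasure Q {f\<in>B. f t \<noteq> 0} = 0))"

definition is_levy_measure :: "'a measure \<Rightarrow> (real \<Rightarrow> 'a \<Rightarrow> real) \<Rightarrow> (real \<Rightarrow> real) measure \<Rightarrow> bool" where
  "is_levy_measure M X Q \<longleftrightarrow> (\<exists>c K. levy_representation M X c K Q) \<and> levy_minimal Q"

end

theory Submission
  imports Defs "HOL-Probability.Characteristic_Functions"
begin

text \<open>Taking \<open>n = 2\<close> and \<open>t = 0\<close> in the definition of time-stability gives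
  \<open>\<phi>\<^sup>2 = \<phi>\<close> for the characteristic function \<open>\<phi>\<close> of \<open>\<xi>(0)\<close>. By the
  Levy-Khintchine formula \<open>|\<phi>(h)| = exp (- h\<^sup>2 K(0,0)/2 - \<integral> (1 - cos (h f(0))) dQ)\<close>,
  which never vanishes, so \<open>\<phi> = 1\<close> and both (nonnegative) terms of the exponent vanish.
  Thus \<open>cos (h f(0)) = 1\<close> for \<open>Q\<close>-almost every \<open>f\<close>, for every \<open>h\<close>; taking
  \<open>h = 1 / 2 ^ n\<close> for all \<open>n\<close> simultaneously forces \<open>f(0) = 0\<close> almost everywhere.\<close>

definition levy_integrand :: "real \<Rightarrow> real \<Rightarrow> complex" where
  "levy_integrand h y = cis (h * y) - 1 - \<i> * complex_of_real (h * trunc_L y)"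

lemma cis_sum: "finite I \<Longrightarrow> cis (\<Sum>i\<in>I. f i) = (\<Prod>i\<in>I. cis (f i))"
  by (simp add: cis_conv_exp sum_distrib_left exp_sum)

lemma borel_measurable_cis [measurable]: "cis \<in> borel_measurable borel"
  unfolding cis_conv_exp by (intro borel_measurable_continuous_onI continuous_intros)

lemma trunc_L_eq_clamp: "trunc_L u = max (-1) (min 1 u)"
  by (auto simp: trunc_L_def)

lemma borel_measurable_trunc_L [measurable]: "trunc_L \<in> borel_measurable borel"
  unfolding trunc_L_eq_clamp[abs_def] by measurable

lemma norm_levy_integrand_le: "norm (levy_integrand h y) \<le> (2 + \<bar>h\<bar> + h\<^sup>2) * min 1 (y\<^sup>2)"
proof (cases "\<bar>y\<bar> \<le> 1")
  case True
  have "y\<^sup>2 \<le> 1" using True by (simp add: abs_square_le_1)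
  have "norm (cis (h * y) - (\<Sum>k\<le>1. (\<i> * (h * y)) ^ k / fact k)) \<le> \<bar>h * y\<bar> ^ 2 / fact 2"
    using iexp_approx1[of "h * y" 1] by (simp add: cis_conv_exp numeral_2_eq_2)
  then have "norm (levy_integrand h y) \<le> \<bar>h * y\<bar> ^ 2 / 2"
    using True by (simp add: levy_integrand_def trunc_L_def diff_diff_eq)
  also have "\<dots> \<le> h\<^sup>2 * y\<^sup>2" by (simp add: power_mult_distrib)
  also have "\<dots> \<le> (2 + \<bar>h\<bar> + h\<^sup>2) * y\<^sup>2" by (intro mult_right_mono) auto
  finally show ?thesis using \<open>y\<^sup>2 \<le> 1\<close> by (simp add: min_def)
next
  case False
  then have "1 \<le> y\<^sup>2" by (simp add: abs_square_less_1 not_less[symmetric])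
  have "\<bar>trunc_L y\<bar> = 1" using False by (auto simp: trunc_L_def)
  have "norm (levy_integrand h y)
        \<le> norm (cis (h * y)) + norm (1::complex) + norm (\<i> * complex_of_real (h * trunc_L y))"
    unfolding levy_integrand_def by (meson norm_triangle_ineq4 order.trans add_right_mono)
  also have "\<dots> = 2 + \<bar>h\<bar>" by (simp add: norm_mult abs_mult \<open>\<bar>trunc_L y\<bar> = 1\<close>)
  also have "\<dots> \<le> (2 + \<bar>h\<bar> + h\<^sup>2) * min 1 (y\<^sup>2)" using \<open>1 \<le> y\<^sup>2\<close> by (simp add: min_def)
  finally show ?thesis .
qed

lemma eq_0_if_cos_divide_power2_eq_1:
  fixes x :: real
  assumes "\<And>n::nat. cos (x / 2 ^ n) = 1"
  shows "x = 0"
proof -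
  obtain n :: nat where n: "\<bar>x\<bar> / (2 * pi) < 2 ^ n"
    using real_arch_pow[of 2 "\<bar>x\<bar> / (2 * pi)"] by auto
  obtain k :: int where k: "x / 2 ^ n = real_of_int k * 2 * pi"
    using assms[of n] cos_one_2pi_int by blast
  have "\<bar>x / 2 ^ n\<bar> < 2 * pi"
    using n pi_gt_zero by (simp add: field_simps)
  then have "\<bar>real_of_int k\<bar> < 1"
    using k pi_gt_zero by (simp add: abs_mult)
  then have "k = 0" by linarith
  with k show "x = 0" by simp
qed

lemma null_if_AE_cos_eq_1:
  fixes g :: "'b \<Rightarrow> real"
  assumes [measurable]: "g \<in> borel_measurable M"
    and cos_eq_1: "\<And>h. AE x in M. cos (h * g x) = 1"
  shows "emeasure M {x \<in> space M. g x \<noteq> 0} = 0"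
proof -
  have "AE x in M. cos (g x / 2 ^ n) = 1" for n :: nat
    using cos_eq_1[of "1 / 2 ^ n"] by simp
  then have "AE x in M. \<forall>n::nat. cos (g x / 2 ^ n) = 1"
    by (simp add: AE_all_countable)
  then have "AE x in M. g x = 0"
    by eventually_elim (rule eq_0_if_cos_divide_power2_eq_1, blast)
  moreover have "{x \<in> space M. g x \<noteq> 0} \<in> sets M"
    by measurable
  ultimately show ?thesis
    by (simp add: AE_iff_measurable[OF _ refl])
qed

lemma (in prob_space) char_fun_sum_iid:
  assumes [measurable]: "Y \<in> borel_measurable M"
  shows "(\<integral>\<omega>. cis (h * (\<Sum>i<n. Y (\<omega> i))) \<partial>Pi\<^sub>M {..<n} (\<lambda>_. M)) = (\<integral>\<omega>. cis (h * Y \<omega>) \<partial>M) ^ n"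
proof -
  interpret product_sigma_finite "\<lambda>_. M"
    by (simp add: product_sigma_finite_def sigma_finite_measure_axioms)
  have "(\<integral>\<omega>. cis (h * (\<Sum>i<n. Y (\<omega> i))) \<partial>Pi\<^sub>M {..<n} (\<lambda>_. M))
      = (\<integral>\<omega>. (\<Prod>i<n. cis (h * Y (\<omega> i))) \<partial>Pi\<^sub>M {..<n} (\<lambda>_. M))"
    by (simp add: sum_distrib_left cis_sum)
  also have "\<dots> = (\<Prod>i<n. \<integral>\<omega>. cis (h * Y \<omega>) \<partial>M)"
    by (rule product_integral_prod) (auto intro!: integrable_const_bound[where B=1])
  finally show ?thesis by simp
qed

lemma same_fdd_char_fun:
  assumes "same_fdd M X N Y" "t \<ge> 0"
    and [measurable]: "X t \<in> borel_measurable M" "Y t \<in> borel_measurable N"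
  shows "(\<integral>\<omega>. cis (h * X t \<omega>) \<partial>M) = (\<integral>\<omega>. cis (h * Y t \<omega>) \<partial>N)"
proof -
  let ?S = "Pi\<^sub>M {t} (\<lambda>_. borel :: real measure)"
  have [measurable]: "(\<lambda>g. g t) \<in> borel_measurable ?S"
    by (rule measurable_component_singleton) simp
  have [measurable]: "(\<lambda>\<omega>. \<lambda>s\<in>{t}. X s \<omega>) \<in> measurable M ?S"
    "(\<lambda>\<omega>. \<lambda>s\<in>{t}. Y s \<omega>) \<in> measurable N ?S"
    by (auto intro!: measurable_restrict)
  have "distr M ?S (\<lambda>\<omega>. \<lambda>s\<in>{t}. X s \<omega>) = distr N ?S (\<lambda>\<omega>. \<lambda>s\<in>{t}. Y s \<omega>)"
    using assms(1,2) unfolding same_fdd_def by auto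
  then have "(\<integral>g. cis (h * g t) \<partial>distr M ?S (\<lambda>\<omega>. \<lambda>s\<in>{t}. X s \<omega>))
           = (\<integral>g. cis (h * g t) \<partial>distr N ?S (\<lambda>\<omega>. \<lambda>s\<in>{t}. Y s \<omega>))"
    by simp
  then show ?thesis
    by (simp add: integral_distr)
qed

lemma time_stable_char_fun_at_0:
  assumes "time_stable M X" "n \<ge> 2"
  shows "(\<integral>\<omega>. cis (h * X 0 \<omega>) \<partial>M) ^ n = (\<integral>\<omega>. cis (h * X 0 \<omega>) \<partial>M)"
proof -
  interpret prob_space M
    using assms(1) by (simp add: time_stable_def real_process_def)
  have [measurable]: "X 0 \<in> borel_measurable M"
    using assms(1) by (simp add: time_stable_def real_process_def)
  have "same_fdd (Pi\<^sub>M {..<n} (\<lambda>_. M)) (\<lambda>t \<omega>. \<Sum>i<n. X t (\<omega> i)) M (\<lambda>t. X (real n * t))"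
    using assms by (simp add: time_stable_def)
  from same_fdd_char_fun[OF this order_refl]
  show ?thesis by (simp add: char_fun_sum_iid)
qed

context
  fixes M :: "'a measure" and X :: "real \<Rightarrow> 'a \<Rightarrow> real" and c :: "real \<Rightarrow> real"
    and K :: "real \<Rightarrow> real \<Rightarrow> real" and Q :: "(real \<Rightarrow> real) measure" and t :: real
  assumes rep: "levy_representation M X c K Q" and t_nonneg: "t \<ge> 0"
begin

lemma levy_measurable_coordinate [measurable]: "(\<lambda>f. f t) \<in> borel_measurable Q"
proof -
  have "sets Q = sets (restrict_space path_space (space path_space - {zero_path}))"
    using rep unfolding levy_representation_def by blast
  moreover have "(\<lambda>f. f t) \<in> borel_measurable path_space"
    using t_nonneg by (intro measurable_component_singleton) simp
  then have "(\<lambda>f. f t) \<in> borel_measurable (restrict_space path_space (space path_space - {zero_path}))"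
    by (rule measurable_restrict_space1)
  ultimately show ?thesis
    using measurable_cong_sets[of Q _ borel borel] by blast
qed

lemma integrable_levy_integrand:
  "integrable Q (\<lambda>f. levy_integrand h (f t))"
proof (rule Bochner_Integration.integrable_bound)
  have "(\<integral>\<^sup>+ f. ennreal (min 1 ((f t)\<^sup>2)) \<partial>Q) < \<infinity>"
    using rep t_nonneg unfolding levy_representation_def by blast
  then have "integrable Q (\<lambda>f. min 1 ((f t)\<^sup>2))"
    by (intro integrableI_nonneg) auto
  then show "integrable Q (\<lambda>f. (2 + \<bar>h\<bar> + h\<^sup>2) * min 1 ((f t)\<^sup>2))"
    by simp
  show "AE f in Q. norm (levy_integrand h (f t)) \<le> norm ((2 + \<bar>h\<bar> + h\<^sup>2) * min 1 ((f t)\<^sup>2))"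
    using norm_levy_integrand_le by auto
qed (simp add: levy_integrand_def)

lemma integrable_one_minus_cos: "integrable Q (\<lambda>f. 1 - cos (h * f t))"
proof -
  have "integrable Q (\<lambda>f. - Re (levy_integrand h (f t)))"
    using integrable_Re[OF integrable_levy_integrand[of h]] by (rule integrable_minus)
  then show ?thesis
    by (simp add: levy_integrand_def)
qed

lemma norm_levy_char_fun:
  "cmod (\<integral>\<omega>. cis (h * X t \<omega>) \<partial>M) = exp (- (h\<^sup>2 * K t t / 2) - (\<integral>f. 1 - cos (h * f t) \<partial>Q))"
proof -
  define z where "z = \<i> * complex_of_real (h * c t) - complex_of_real (h\<^sup>2 * K t t / 2)
    + (\<integral>f. levy_integrand h (f t) \<partial>Q)"
  have "(\<integral>\<omega>. cis (h * X t \<omega>) \<partial>M) = exp z"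
    using rep[unfolded levy_representation_def, THEN conjunct2, THEN conjunct2, THEN conjunct2,
        THEN conjunct2, THEN conjunct2, rule_format, of "{t}" "\<lambda>_. h"] t_nonneg
    by (simp add: z_def levy_integrand_def power2_eq_square)
  moreover have "Re (\<integral>f. levy_integrand h (f t) \<partial>Q) = (\<integral>f. cos (h * f t) - 1 \<partial>Q)"
    using integrable_levy_integrand[of h] by (subst integral_Re[symmetric]) (simp_all add: levy_integrand_def)
  then have "Re z = - (h\<^sup>2 * K t t / 2) - (\<integral>f. 1 - cos (h * f t) \<partial>Q)"
    by (simp add: z_def flip: Bochner_Integration.integral_minus)
  ultimately show ?thesis
    by simp
qed

lemma levy_char_fun_nonzero: "(\<integral>\<omega>. cis (h * X t \<omega>) \<partial>M) \<noteq> 0"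
proof
  assume "(\<integral>\<omega>. cis (h * X t \<omega>) \<partial>M) = 0"
  with norm_levy_char_fun[of h] show False
    by simp
qed

lemma AE_cos_eq_1_if_norm_char_fun_eq_1:
  assumes "cmod (\<integral>\<omega>. cis (h * X t \<omega>) \<partial>M) = 1"
  shows "AE f in Q. cos (h * f t) = 1"
proof -
  have "0 \<le> K t t"
    using rep[unfolded levy_representation_def, THEN conjunct2, THEN conjunct1,
        rule_format, of "{t}" "\<lambda>_. 1"] t_nonneg by simp
  then have "0 \<le> h\<^sup>2 * K t t"
    by simp
  moreover have "0 \<le> (\<integral>f. 1 - cos (h * f t) \<partial>Q)"
    by (rule integral_nonneg_AE) simp
  moreover have "exp (- (h\<^sup>2 * K t t / 2) - (\<integral>f. 1 - cos (h * f t) \<partial>Q)) = 1"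
    using norm_levy_char_fun[of h] assms by (rule subst)
  ultimately have "(\<integral>f. 1 - cos (h * f t) \<partial>Q) = 0"
    unfolding exp_eq_one_iff by linarith
  then have "AE f in Q. 1 - cos (h * f t) = 0"
    using integral_nonneg_eq_0_iff_AE[OF integrable_one_minus_cos] by simp
  then show ?thesis
    by simp
qed

lemma levy_null_coordinate_if_norm_char_fun_eq_1:
  assumes "\<And>h. cmod (\<integral>\<omega>. cis (h * X t \<omega>) \<partial>M) = 1"
  shows "emeasure Q {f \<in> space Q. f t \<noteq> 0} = 0"
  using levy_measurable_coordinate AE_cos_eq_1_if_norm_char_fun_eq_1[OF assms]
  by (rule null_if_AE_cos_eq_1)

end

theorem lemma3p2:
  fixes M :: "'a measure" and X :: "real \<Rightarrow> 'a \<Rightarrow> real" and Q :: "(real \<Rightarrow> real) measure"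
  assumes "time_stable M X"
    and "is_levy_measure M X Q"
  shows "emeasure Q {f \<in> space Q. f 0 \<noteq> 0} = 0"
proof -
  obtain c K where rep: "levy_representation M X c K Q"
    using assms(2) by (auto simp: is_levy_measure_def)
  have char_fun_eq_1: "(\<integral>\<omega>. cis (h * X 0 \<omega>) \<partial>M) = 1" for h
  proof -
    have "(\<integral>\<omega>. cis (h * X 0 \<omega>) \<partial>M) ^ 2 = (\<integral>\<omega>. cis (h * X 0 \<omega>) \<partial>M)"
      using assms(1) by (rule time_stable_char_fun_at_0) simp
    moreover have "(\<integral>\<omega>. cis (h * X 0 \<omega>) \<partial>M) \<noteq> 0"
      using rep by (rule levy_char_fun_nonzero) simp
    ultimately show ?thesis
      by (metis power2_eq_square mult_cancel_left1)
  qed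
  show ?thesis
    by (rule levy_null_coordinate_if_norm_char_fun_eq_1[OF rep]) (simp_all add: char_fun_eq_1)
qed

end
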